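(* Let $E$ be a finite non-empty subset of $\Theta$, and let $0<\delta<\epsilon$. Assume $E\setminus S^\epsilon(E)\neq\emptyset$ and that there exist $b_1,b_2>0$ such that for every $t\in\mathbb R$ and all $\theta,\theta'\in E$: $$\mathcal M(\theta,\theta',t,Y)\le\exp\Big(\mathbb E[\Gamma(\theta,\theta',X,Y)\mid Y]\,t+\frac{b_1^2t^2}{2}\Big)\quad\text{a.s.},$$ $$\mathbb E\big[\exp\big(t\,\mathbb E[\Gamma(\theta,\theta',X,Y)\mid Y]\big)\big]\le\exp\Big(\mathbb E[\Gamma(\theta,\theta',X,Y)]\,t+\frac{b_2^2t^2}{2}\Big).$$ Then, for every $M,N\ge1$ and every hierarchical sample $(X^{k,l},Y^k)_{1\le k\le M,1\le l\le N}$ of $(X,Y)$, $$\mathbb P\big(\hat S^\delta_{M,N}(E)\not\subset S^\epsilon(E)\big)<|E|\exp\Big(\frac{-M(\epsilon-\delta)^2}{2(b_1^2/N+b_2^2)}\Big).$$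
   Context: $X$ and $Y$ are random variables with values in measurable spaces $\mathcal X$ and $\mathcal Y$. A hierarchical sample of size $M\times N$ of $(X,Y)$ consists of random variables $Y^1,\dots,Y^M$ and $X^{k,l}$, $1\le k\le M$, $1\le l\le N$, such that the blocks $(Y^k,X^{k,1},\dots,X^{k,N})$ are i.i.d. over $k$, each $Y^k$ has the law of $Y$, and, conditionally on $Y^k$, $X^{k,1},\dots,X^{k,N}$ are i.i.d. with the conditional law of $X$ given $Y=Y^k$. $\Theta\subset\mathbb R^d$ is a parameter set and $g:\Theta\times\mathcal X\times\mathcal Y\to\mathbb R$ is measurable with $g(\theta,X,Y)$ integrable for every $\theta$. Define $G(\theta)=\mathbb E[g(\theta,X,Y)]$ and $\hat G_{M,N}(\theta)=\frac1{MN}\sum_{k=1}^M\sum_{l=1}^N g(\theta,X^{k,l},Y^k)$. For $\epsilon>0$ and non-empty $E\subset\Theta$ (on which the minima below are attained), $S^\epsilon(E)=\{\theta\in E: G(\theta)\le\min_E G+\epsilon\}$ and $\hat S^\epsilon_{M,N}(E)=\{\theta\in E:\hat G_{M,N}(\theta)\le\min_E\hat G_{M,N}+\epsilon\}$. For $\theta,\theta'\in\Theta$, $t\in\mathbb R$, $y\in\mathcal Y$: $\Gamma(\theta,\theta',X,Y)=g(\theta',X,Y)-g(\theta,X,Y)$ and $\mathcal M(\theta,\theta',t,y)=\mathbb E[\exp(t\Gamma(\theta,\theta',X,Y))\mid Y=y]$. *)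

theory Defs
  imports "HOL-Probability.Probability"
begin

definition sigmaY :: "'w measure \<Rightarrow> ('w \<Rightarrow> 'y) \<Rightarrow> 'y measure \<Rightarrow> 'w measure" where
  "sigmaY M Y MY = vimage_algebra (space M) Y MY"

definition Gfun :: "'w measure \<Rightarrow> ('w \<Rightarrow> 'x) \<Rightarrow> ('w \<Rightarrow> 'y) \<Rightarrow> ('t \<Rightarrow> 'x \<Rightarrow> 'y \<Rightarrow> real) \<Rightarrow> 't \<Rightarrow> real" where
  "Gfun M X Y g \<theta> = (\<integral>\<omega>. g \<theta> (X \<omega>) (Y \<omega>) \<partial>M)"

definition Gam :: "('w \<Rightarrow> 'x) \<Rightarrow> ('w \<Rightarrow> 'y) \<Rightarrow> ('t \<Rightarrow> 'x \<Rightarrow> 'y \<Rightarrow> real) \<Rightarrow> 't \<Rightarrow> 't \<Rightarrow> 'w \<Rightarrow> real" where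
  "Gam X Y g \<theta> \<theta>' \<omega> = g \<theta>' (X \<omega>) (Y \<omega>) - g \<theta> (X \<omega>) (Y \<omega>)"

text \<open>Hierarchical sample of size Mn x N (indices 0-based: k < Mn, l < N) defined on a
  probability space P: measurability, independence of the blocks over k, and the law of each
  block (Y^k, X^{k,0..N-1}) equals that of (Y, N conditionally i.i.d. copies of X given Y),
  characterised by E[h(Y^k) prod_l f_l(X^{k,l})] = E[h(Y) prod_l E[f_l(X) | Y]]
  for all bounded measurable h, f_l.\<close>
definition hier_sample ::
  "'w measure \<Rightarrow> 'x measure \<Rightarrow> 'y measure \<Rightarrow> ('w \<Rightarrow> 'x) \<Rightarrow> ('w \<Rightarrow> 'y) \<Rightarrow>
   'p measure \<Rightarrow> nat \<Rightarrow> nat \<Rightarrow> (nat \<Rightarrow> 'p \<Rightarrow> 'y) \<Rightarrow> (nat \<Rightarrow> nat \<Rightarrow> 'p \<Rightarrow> 'x) \<Rightarrow> bool" where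
  "hier_sample M MX MY X Y P Mn N Ys Xs \<longleftrightarrow>
     prob_space P \<and>
     (\<forall>k<Mn. Ys k \<in> measurable P MY) \<and>
     (\<forall>k<Mn. \<forall>l<N. Xs k l \<in> measurable P MX) \<and>
     prob_space.indep_vars P (\<lambda>k. MY \<Otimes>\<^sub>M PiM {..<N} (\<lambda>_. MX))
        (\<lambda>k \<omega>. (Ys k \<omega>, \<lambda>l\<in>{..<N}. Xs k l \<omega>)) {..<Mn} \<and>
     (\<forall>h f. h \<in> borel_measurable MY \<longrightarrow> (\<exists>B. \<forall>y. \<bar>h y\<bar> \<le> B) \<longrightarrow>
        (\<forall>l<N. f l \<in> borel_measurable MX \<and> (\<exists>B. \<forall>x. \<bar>f l x\<bar> \<le> B)) \<longrightarrow>
        (\<forall>k<Mn. (\<integral>\<omega>. h (Ys k \<omega>) * (\<Prod>l<N. f l (Xs k l \<omega>)) \<partial>P) =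
                 (\<integral>\<omega>. h (Y \<omega>) * (\<Prod>l<N. real_cond_exp M (sigmaY M Y MY) (\<lambda>\<omega>'. f l (X \<omega>')) \<omega>) \<partial>M)))"

definition Ghat :: "nat \<Rightarrow> nat \<Rightarrow> (nat \<Rightarrow> 'p \<Rightarrow> 'y) \<Rightarrow> (nat \<Rightarrow> nat \<Rightarrow> 'p \<Rightarrow> 'x) \<Rightarrow>
    ('t \<Rightarrow> 'x \<Rightarrow> 'y \<Rightarrow> real) \<Rightarrow> 'p \<Rightarrow> 't \<Rightarrow> real" where
  "Ghat Mn N Ys Xs g \<omega> \<theta> = (1 / (real Mn * real N)) * (\<Sum>k<Mn. \<Sum>l<N. g \<theta> (Xs k l \<omega>) (Ys k \<omega>))"

text \<open>epsilon-optimal set of a function F on E (E finite non-empty, so the min exists)\<close>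
definition eps_opt :: "('t \<Rightarrow> real) \<Rightarrow> real \<Rightarrow> 't set \<Rightarrow> 't set" where
  "eps_opt F \<epsilon> E = {\<theta>\<in>E. F \<theta> \<le> Min (F ` E) + \<epsilon>}"

end

theory Submission
  imports Defs
begin

text \<open>
  If a parameter \<open>\<theta>\<close> that is not \<open>\<epsilon>\<close>-optimal is \<open>\<delta>\<close>-optimal for the empirical objective,
  then its empirical gap to a true minimiser \<open>\<theta>\<^sub>0\<close> is at most \<open>\<delta>\<close> while its mean gap exceeds
  \<open>\<epsilon>\<close>. A Chernoff bound on the gap factorises over the independent blocks. Within a block the
  \<open>N\<close> inner terms are conditionally independent given \<open>Y\<^sup>k\<close>, so the block moment generating
  function is the expectation of the \<open>N\<close>-th power of the conditional one; the two sub-Gaussian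
  hypotheses then bound it by a Gaussian moment generating function with variance proxy
  \<open>N b\<^sub>1\<^sup>2 + N\<^sup>2 b\<^sub>2\<^sup>2\<close>. Optimising the exponent and a union bound over \<open>E\<close> give the result.

  The conditional factorisation of a block is only given for test functions of product form
  \<open>h(y) \<Prod> f\<^sub>l(x\<^sub>l)\<close>. It is extended to products \<open>\<Prod> \<phi>\<^sub>l(x\<^sub>l, y)\<close> of bounded measurable functions by
  replacing rectangle indicators by arbitrary functions one factor at a time (a \<open>\<pi>\<close>-\<open>\<lambda>\<close> argument),
  and to unbounded nonnegative ones by truncation.
\<close>

lemma subalgebra_sigmaY:
  assumes "Y \<in> measurable M MY"
  shows "subalgebra M (sigmaY M Y MY)"
  using assms unfolding subalgebra_def sigmaY_def measurable_iff_sets by auto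

lemma measurable_sigmaY_comp:
  assumes "Y \<in> measurable M MY" "h \<in> measurable MY N"
  shows "(\<lambda>\<omega>. h (Y \<omega>)) \<in> measurable (sigmaY M Y MY) N"
proof -
  have "Y \<in> measurable (sigmaY M Y MY) MY"
    unfolding sigmaY_def using assms(1)
    by (intro measurable_vimage_algebra1) (auto simp: measurable_def)
  then show ?thesis using assms(2) by (rule measurable_compose)
qed

lemma borel_measurable_curry_comp:
  assumes "(\<lambda>z. \<gamma> (fst z) (snd z)) \<in> borel_measurable (MX \<Otimes>\<^sub>M MY)"
    and "a \<in> measurable L MX" "b \<in> measurable L MY"
  shows "(\<lambda>\<omega>. \<gamma> (a \<omega>) (b \<omega>)) \<in> borel_measurable L"
  using measurable_compose[OF measurable_Pair[OF assms(2,3)] assms(1)] by simp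

lemma prod_indicator_times:
  "(\<Prod>l\<in>I. indicator (A l \<times> B l) (x l, y) :: ennreal) =
     ennreal ((\<Prod>l\<in>I. indicator (B l) y) * (\<Prod>l\<in>I. indicator (A l) (x l)))"
proof -
  have "(\<Prod>l\<in>I. indicator (A l \<times> B l) (x l, y) :: ennreal) =
      (\<Prod>l\<in>I. ennreal (indicator (B l) y * indicator (A l) (x l)))"
    by (intro prod.cong) (auto simp: indicator_def)
  also have "\<dots> = ennreal (\<Prod>l\<in>I. indicator (B l) y * indicator (A l) (x l))"
    by (intro prod_ennreal) auto
  finally show ?thesis by (simp add: prod.distrib)
qed

lemma prod_fun_upd_split:
  assumes "finite A" "j \<in> A"
  shows "(\<Prod>l\<in>A. h l ((\<phi>(j := \<psi>)) l)) = h j \<psi> * (\<Prod>l\<in>A - {j}. h l (\<phi> l))"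
proof -
  have "(\<Prod>l\<in>A. h l ((\<phi>(j := \<psi>)) l)) = h j \<psi> * (\<Prod>l\<in>A - {j}. h l ((\<phi>(j := \<psi>)) l))"
    using assms by (subst prod.remove[of _ j]) auto
  also have "(\<Prod>l\<in>A - {j}. h l ((\<phi>(j := \<psi>)) l)) = (\<Prod>l\<in>A - {j}. h l (\<phi> l))"
    by (intro prod.cong) auto
  finally show ?thesis .
qed

lemma prod_ennreal_eq_SUP_min:
  assumes "finite I" "\<And>i. i \<in> I \<Longrightarrow> 0 \<le> f i"
  shows "(\<Prod>i\<in>I. ennreal (f i)) = (SUP n. \<Prod>i\<in>I. ennreal (min (f i) (real n)))"
proof (rule antisym)
  obtain n where n: "(\<Sum>i\<in>I. f i) \<le> real n" using real_arch_simple by blast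
  have "(\<Prod>i\<in>I. ennreal (f i)) = (\<Prod>i\<in>I. ennreal (min (f i) (real n)))"
  proof (intro prod.cong refl)
    fix i assume "i \<in> I"
    then have "f i \<le> (\<Sum>i\<in>I. f i)" using assms by (intro member_le_sum) auto
    then show "ennreal (f i) = ennreal (min (f i) (real n))" using n by simp
  qed
  also have "\<dots> \<le> (SUP n. \<Prod>i\<in>I. ennreal (min (f i) (real n)))" by (rule SUP_upper) simp
  finally show "(\<Prod>i\<in>I. ennreal (f i)) \<le> (SUP n. \<Prod>i\<in>I. ennreal (min (f i) (real n)))" .
  show "(SUP n. \<Prod>i\<in>I. ennreal (min (f i) (real n))) \<le> (\<Prod>i\<in>I. ennreal (f i))"
    by (intro SUP_least prod_mono_ennreal) (auto intro!: ennreal_leI)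
qed

lemma gaussian_chernoff_exponent:
  fixes b1 b2 \<mu> \<delta> n m c s :: real
  assumes "n > 0" "c > 0" "c = b1\<^sup>2 / n + b2\<^sup>2" "s = (\<mu> - \<delta>) / (n * c)"
  shows "s * (m * n * \<delta>) + m * (n * (\<mu> * (- s) + (b1\<^sup>2 + n * b2\<^sup>2) * (- s)\<^sup>2 / 2))
    = - m * (\<mu> - \<delta>)\<^sup>2 / (2 * c)"
proof -
  have "b1\<^sup>2 + n * b2\<^sup>2 = n * c" using assms(1,3) by (simp add: field_simps)
  moreover have "\<mu> = \<delta> + n * c * s" using assms(1,2,4) by (simp add: field_simps)
  ultimately show ?thesis using assms(1,2) by (simp add: field_simps power2_eq_square)
qed

locale hier_block =
  fixes M :: "'w measure" and MX :: "'x measure" and MY :: "'y measure"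
    and X :: "'w \<Rightarrow> 'x" and Y :: "'w \<Rightarrow> 'y" and P :: "'p measure" and N :: nat
    and Yk :: "'p \<Rightarrow> 'y" and Xk :: "nat \<Rightarrow> 'p \<Rightarrow> 'x"
  assumes M: "prob_space M"
    and X[measurable]: "X \<in> measurable M MX" and Y[measurable]: "Y \<in> measurable M MY"
    and P: "prob_space P" and Yk[measurable]: "Yk \<in> measurable P MY"
    and Xk[measurable]: "\<And>l. l < N \<Longrightarrow> Xk l \<in> measurable P MX"
    and law: "\<And>h f. h \<in> borel_measurable MY \<Longrightarrow> (\<exists>B. \<forall>y. \<bar>h y\<bar> \<le> B) \<Longrightarrow>
       (\<forall>l<N. f l \<in> borel_measurable MX \<and> (\<exists>B. \<forall>x. \<bar>f l x\<bar> \<le> B)) \<Longrightarrow>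
       (\<integral>\<omega>. h (Yk \<omega>) * (\<Prod>l<N. f l (Xk l \<omega>)) \<partial>P) =
       (\<integral>\<omega>. h (Y \<omega>) * (\<Prod>l<N. real_cond_exp M (sigmaY M Y MY) (\<lambda>\<omega>'. f l (X \<omega>')) \<omega>) \<partial>M)"
begin

sublocale PM: prob_space M by (rule M)
sublocale PP: prob_space P by (rule P)
sublocale FS: finite_measure_subalgebra M "sigmaY M Y MY"
  by (intro finite_measure_subalgebra.intro finite_measure_subalgebra_axioms.intro
      subalgebra_sigmaY Y) (rule PM.finite_measure_axioms)

abbreviation "F \<equiv> sigmaY M Y MY"

definition sample_prod_integral :: "(nat \<Rightarrow> 'x \<times> 'y \<Rightarrow> ennreal) \<Rightarrow> ennreal" where
  "sample_prod_integral \<phi> = (\<integral>\<^sup>+\<omega>. (\<Prod>l<N. \<phi> l (Xk l \<omega>, Yk \<omega>)) \<partial>P)"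

definition cond_prod_integral :: "(nat \<Rightarrow> 'x \<times> 'y \<Rightarrow> ennreal) \<Rightarrow> ennreal" where
  "cond_prod_integral \<phi> = (\<integral>\<^sup>+\<omega>. (\<Prod>l<N. nn_cond_exp M F (\<lambda>\<omega>. \<phi> l (X \<omega>, Y \<omega>)) \<omega>) \<partial>M)"

definition is_rect_indicator :: "('x \<times> 'y \<Rightarrow> ennreal) \<Rightarrow> bool" where
  "is_rect_indicator \<psi> \<longleftrightarrow> (\<exists>A\<in>sets MX. \<exists>B\<in>sets MY. \<psi> = indicator (A \<times> B))"

lemma nn_cond_exp_indicator_eq_real_cond_exp:
  assumes "A \<in> sets MX"
  defines "r \<equiv> real_cond_exp M F (\<lambda>\<omega>. indicator A (X \<omega>))"
  shows "AE \<omega> in M. nn_cond_exp M F (\<lambda>\<omega>. indicator A (X \<omega>)) \<omega> = ennreal (r \<omega>) \<and> 0 \<le> r \<omega> \<and> r \<omega> \<le> 1"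
proof -
  have "AE \<omega> in M. (\<lambda>_. 0::ennreal) \<omega> = nn_cond_exp M F (\<lambda>_. 0) \<omega>"
    by (rule FS.nn_cond_exp_F_meas) simp
  moreover have "AE \<omega> in M. (\<lambda>_. 1::ennreal) \<omega> = nn_cond_exp M F (\<lambda>_. 1) \<omega>"
    by (rule FS.nn_cond_exp_F_meas) simp
  moreover have "AE \<omega> in M. nn_cond_exp M F (\<lambda>\<omega>. indicator A (X \<omega>)) \<omega> \<le> nn_cond_exp M F (\<lambda>_. 1) \<omega>"
    by (rule FS.nn_cond_exp_mono) (use assms in \<open>auto simp: indicator_def\<close>)
  ultimately show ?thesis
  proof eventually_elim
    case (elim \<omega>)
    then have le1: "nn_cond_exp M F (\<lambda>\<omega>. indicator A (X \<omega>)) \<omega> \<le> 1" by simp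
    have "(\<lambda>\<omega>. ennreal (indicator A (X \<omega>))) = (\<lambda>\<omega>. indicator A (X \<omega>))"
      by (auto simp: ennreal_indicator)
    moreover have "(\<lambda>\<omega>. ennreal (- indicator A (X \<omega>))) = (\<lambda>_. 0)"
      by (auto simp: indicator_def ennreal_neg)
    ultimately have "r \<omega> = enn2real (nn_cond_exp M F (\<lambda>\<omega>. indicator A (X \<omega>)) \<omega>)"
      unfolding r_def real_cond_exp_def using elim(1)[symmetric] by simp
    moreover have "nn_cond_exp M F (\<lambda>\<omega>. indicator A (X \<omega>)) \<omega> \<noteq> \<top>"
      using le1 by (metis ennreal_one_neq_top neq_top_trans)
    ultimately show ?case using le1 by (auto simp: less_top intro!: enn2real_leI)
  qed
qed

lemma nn_cond_exp_rect_indicator: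
  assumes [measurable]: "A \<in> sets MX" "B \<in> sets MY"
  defines "r \<equiv> real_cond_exp M F (\<lambda>\<omega>. indicator A (X \<omega>))"
  shows "AE \<omega> in M. nn_cond_exp M F (\<lambda>\<omega>. indicator (A \<times> B) (X \<omega>, Y \<omega>)) \<omega> =
    ennreal (indicator B (Y \<omega>) * r \<omega>) \<and> 0 \<le> r \<omega> \<and> r \<omega> \<le> 1"
proof -
  have rect: "(\<lambda>\<omega>. indicator (A \<times> B) (X \<omega>, Y \<omega>) :: ennreal) = (\<lambda>\<omega>. indicator B (Y \<omega>) * indicator A (X \<omega>))"
    by (auto simp: indicator_times mult.commute)
  have "AE \<omega> in M. indicator B (Y \<omega>) * nn_cond_exp M F (\<lambda>\<omega>. indicator A (X \<omega>)) \<omega> =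
      nn_cond_exp M F (\<lambda>\<omega>. indicator B (Y \<omega>) * indicator A (X \<omega>)) \<omega>"
    by (rule FS.nn_cond_exp_prod) (auto intro!: measurable_sigmaY_comp)
  then show ?thesis
    using nn_cond_exp_indicator_eq_real_cond_exp[OF assms(1)] unfolding r_def rect
    by eventually_elim (auto simp: ennreal_mult ennreal_indicator)
qed

lemma sample_prod_integral_rect:
  assumes [measurable]: "\<And>l. l < N \<Longrightarrow> A l \<in> sets MX" "\<And>l. l < N \<Longrightarrow> B l \<in> sets MY"
  shows "sample_prod_integral (\<lambda>l. indicator (A l \<times> B l)) =
    ennreal (\<integral>\<omega>. (\<Prod>l<N. indicator (B l) (Yk \<omega>)) * (\<Prod>l<N. indicator (A l) (Xk l \<omega>)) \<partial>P)"
  unfolding sample_prod_integral_def prod_indicator_times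
proof (rule nn_integral_eq_integral)
  show "integrable P (\<lambda>\<omega>. (\<Prod>l<N. indicator (B l) (Yk \<omega>)) * (\<Prod>l<N. indicator (A l) (Xk l \<omega>)) :: real)"
    by (rule PP.integrable_const_bound[where B=1])
      (auto simp: abs_mult abs_prod indicator_def intro!: mult_le_one prod_le_1 prod_nonneg)
qed (auto intro!: AE_I2 mult_nonneg_nonneg prod_nonneg)

lemma cond_prod_integral_rect:
  assumes [measurable]: "\<And>l. l < N \<Longrightarrow> A l \<in> sets MX" "\<And>l. l < N \<Longrightarrow> B l \<in> sets MY"
  defines "r \<equiv> \<lambda>l. real_cond_exp M F (\<lambda>\<omega>. indicator (A l) (X \<omega>))"
  shows "cond_prod_integral (\<lambda>l. indicator (A l \<times> B l)) =
    ennreal (\<integral>\<omega>. (\<Prod>l<N. indicator (B l) (Y \<omega>)) * (\<Prod>l<N. r l \<omega>) \<partial>M)"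
proof -
  have AE: "AE \<omega> in M. \<forall>l\<in>{..<N}. nn_cond_exp M F (\<lambda>\<omega>. indicator (A l \<times> B l) (X \<omega>, Y \<omega>)) \<omega> =
      ennreal (indicator (B l) (Y \<omega>) * r l \<omega>) \<and> 0 \<le> r l \<omega> \<and> r l \<omega> \<le> 1"
    unfolding r_def by (intro AE_finite_allI nn_cond_exp_rect_indicator) auto
  have "cond_prod_integral (\<lambda>l. indicator (A l \<times> B l)) =
      (\<integral>\<^sup>+\<omega>. ennreal ((\<Prod>l<N. indicator (B l) (Y \<omega>)) * (\<Prod>l<N. r l \<omega>)) \<partial>M)"
    unfolding cond_prod_integral_def
  proof (rule nn_integral_cong_AE)
    show "AE \<omega> in M. (\<Prod>l<N. nn_cond_exp M F (\<lambda>\<omega>. indicator (A l \<times> B l) (X \<omega>, Y \<omega>)) \<omega>) =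
        ennreal ((\<Prod>l<N. indicator (B l) (Y \<omega>)) * (\<Prod>l<N. r l \<omega>))"
      using AE
    proof eventually_elim
      case (elim \<omega>)
      then have "(\<Prod>l<N. nn_cond_exp M F (\<lambda>\<omega>. indicator (A l \<times> B l) (X \<omega>, Y \<omega>)) \<omega>) =
          (\<Prod>l<N. ennreal (indicator (B l) (Y \<omega>) * r l \<omega>))"
        by (intro prod.cong) auto
      also have "\<dots> = ennreal (\<Prod>l<N. indicator (B l) (Y \<omega>) * r l \<omega>)"
        using elim by (intro prod_ennreal) auto
      finally show ?case by (simp add: prod.distrib)
    qed
  qed
  also have "\<dots> = ennreal (\<integral>\<omega>. (\<Prod>l<N. indicator (B l) (Y \<omega>)) * (\<Prod>l<N. r l \<omega>) \<partial>M)"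
  proof (rule nn_integral_eq_integral)
    show "integrable M (\<lambda>\<omega>. (\<Prod>l<N. indicator (B l) (Y \<omega>)) * (\<Prod>l<N. r l \<omega>))"
      using AE by (intro PM.integrable_const_bound[where B=1])
        (auto elim!: eventually_mono simp: r_def abs_mult abs_prod indicator_def
          intro!: mult_le_one prod_le_1 prod_nonneg)
    show "AE \<omega> in M. 0 \<le> (\<Prod>l<N. indicator (B l) (Y \<omega>)) * (\<Prod>l<N. r l \<omega>)"
      using AE by eventually_elim (auto intro!: mult_nonneg_nonneg prod_nonneg)
  qed
  finally show ?thesis .
qed

lemma block_law_rect:
  assumes "\<And>l. l < N \<Longrightarrow> is_rect_indicator (\<phi> l)"
  shows "sample_prod_integral \<phi> = cond_prod_integral \<phi>"
proof -
  obtain A B where A[measurable]: "\<And>l. l < N \<Longrightarrow> A l \<in> sets MX"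
    and B[measurable]: "\<And>l. l < N \<Longrightarrow> B l \<in> sets MY"
    and \<phi>: "\<And>l. l < N \<Longrightarrow> \<phi> l = indicator (A l \<times> B l)"
    using assms unfolding is_rect_indicator_def by metis
  have "sample_prod_integral \<phi> = sample_prod_integral (\<lambda>l. indicator (A l \<times> B l))"
    unfolding sample_prod_integral_def using \<phi> by (intro nn_integral_cong prod.cong) auto
  moreover have "cond_prod_integral \<phi> = cond_prod_integral (\<lambda>l. indicator (A l \<times> B l))"
    unfolding cond_prod_integral_def using \<phi> by (intro nn_integral_cong prod.cong) auto
  moreover have "(\<integral>\<omega>. (\<Prod>l<N. indicator (B l) (Yk \<omega>)) * (\<Prod>l<N. indicator (A l) (Xk l \<omega>)) \<partial>P) =
      (\<integral>\<omega>. (\<Prod>l<N. indicator (B l) (Y \<omega>)) *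
        (\<Prod>l<N. real_cond_exp M F (\<lambda>\<omega>. indicator (A l) (X \<omega>)) \<omega>) \<partial>M)"
    by (rule law) (auto simp: abs_prod indicator_def intro!: exI[of _ 1] prod_le_1)
  ultimately show ?thesis
    using sample_prod_integral_rect[OF A B] cond_prod_integral_rect[OF A B] by simp
qed

definition sample_weighted_distr :: "(nat \<Rightarrow> 'x \<times> 'y \<Rightarrow> ennreal) \<Rightarrow> nat \<Rightarrow> ('x \<times> 'y) measure" where
  "sample_weighted_distr \<phi> j =
     distr (density P (\<lambda>\<omega>. \<Prod>l\<in>{..<N} - {j}. \<phi> l (Xk l \<omega>, Yk \<omega>))) (MX \<Otimes>\<^sub>M MY) (\<lambda>\<omega>. (Xk j \<omega>, Yk \<omega>))"

definition cond_weighted_distr :: "(nat \<Rightarrow> 'x \<times> 'y \<Rightarrow> ennreal) \<Rightarrow> nat \<Rightarrow> ('x \<times> 'y) measure" where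
  "cond_weighted_distr \<phi> j =
     distr (density M (\<lambda>\<omega>. \<Prod>l\<in>{..<N} - {j}. nn_cond_exp M F (\<lambda>\<omega>. \<phi> l (X \<omega>, Y \<omega>)) \<omega>))
       (MX \<Otimes>\<^sub>M MY) (\<lambda>\<omega>. (X \<omega>, Y \<omega>))"

lemma sample_prod_integral_fun_upd:
  assumes "j < N" and [measurable]: "\<And>l. \<phi> l \<in> borel_measurable (MX \<Otimes>\<^sub>M MY)"
    "\<psi> \<in> borel_measurable (MX \<Otimes>\<^sub>M MY)"
  shows "sample_prod_integral (\<phi>(j := \<psi>)) = (\<integral>\<^sup>+z. \<psi> z \<partial>sample_weighted_distr \<phi> j)"
proof -
  have "sample_prod_integral (\<phi>(j := \<psi>)) =
      (\<integral>\<^sup>+\<omega>. (\<Prod>l\<in>{..<N} - {j}. \<phi> l (Xk l \<omega>, Yk \<omega>)) * \<psi> (Xk j \<omega>, Yk \<omega>) \<partial>P)"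
    unfolding sample_prod_integral_def
  proof (intro nn_integral_cong)
    fix \<omega>
    show "(\<Prod>l<N. (\<phi>(j := \<psi>)) l (Xk l \<omega>, Yk \<omega>)) =
        (\<Prod>l\<in>{..<N} - {j}. \<phi> l (Xk l \<omega>, Yk \<omega>)) * \<psi> (Xk j \<omega>, Yk \<omega>)"
      using prod_fun_upd_split[of "{..<N}" j "\<lambda>l f. f (Xk l \<omega>, Yk \<omega>)"] \<open>j < N\<close>
      by (simp add: mult.commute)
  qed
  also have "\<dots> = (\<integral>\<^sup>+z. \<psi> z \<partial>sample_weighted_distr \<phi> j)"
    unfolding sample_weighted_distr_def using \<open>j < N\<close>
    by (simp add: nn_integral_distr nn_integral_density)
  finally show ?thesis .
qed

lemma cond_prod_integral_fun_upd:
  assumes "j < N" and [measurable]: "\<And>l. \<phi> l \<in> borel_measurable (MX \<Otimes>\<^sub>M MY)"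
    "\<psi> \<in> borel_measurable (MX \<Otimes>\<^sub>M MY)"
  shows "cond_prod_integral (\<phi>(j := \<psi>)) = (\<integral>\<^sup>+z. \<psi> z \<partial>cond_weighted_distr \<phi> j)"
proof -
  let ?w = "\<lambda>\<omega>. \<Prod>l\<in>{..<N} - {j}. nn_cond_exp M F (\<lambda>\<omega>. \<phi> l (X \<omega>, Y \<omega>)) \<omega>"
  have "cond_prod_integral (\<phi>(j := \<psi>)) = (\<integral>\<^sup>+\<omega>. ?w \<omega> * nn_cond_exp M F (\<lambda>\<omega>. \<psi> (X \<omega>, Y \<omega>)) \<omega> \<partial>M)"
    unfolding cond_prod_integral_def
  proof (intro nn_integral_cong)
    fix \<omega>
    show "(\<Prod>l<N. nn_cond_exp M F (\<lambda>\<omega>. (\<phi>(j := \<psi>)) l (X \<omega>, Y \<omega>)) \<omega>) =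
        ?w \<omega> * nn_cond_exp M F (\<lambda>\<omega>. \<psi> (X \<omega>, Y \<omega>)) \<omega>"
      using prod_fun_upd_split[of "{..<N}" j "\<lambda>l f. nn_cond_exp M F (\<lambda>\<omega>. f (X \<omega>, Y \<omega>)) \<omega>"]
        \<open>j < N\<close>
      by (simp add: mult.commute)
  qed
  also have "\<dots> = (\<integral>\<^sup>+\<omega>. ?w \<omega> * \<psi> (X \<omega>, Y \<omega>) \<partial>M)"
    by (rule FS.nn_cond_exp_intg) simp_all
  also have "\<dots> = (\<integral>\<^sup>+z. \<psi> z \<partial>cond_weighted_distr \<phi> j)"
    unfolding cond_weighted_distr_def by (simp add: nn_integral_distr nn_integral_density)
  finally show ?thesis .
qed

lemma sample_weighted_distr_finite:
  assumes "j < N" and [measurable]: "\<And>l. \<phi> l \<in> borel_measurable (MX \<Otimes>\<^sub>M MY)"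
    and bounded: "\<And>l z. \<phi> l z \<le> ennreal c"
  shows "emeasure (sample_weighted_distr \<phi> j) (space MX \<times> space MY) \<noteq> \<infinity>"
proof -
  let ?\<Omega> = "space MX \<times> space MY"
  have [measurable]: "?\<Omega> \<in> sets (MX \<Otimes>\<^sub>M MY)"
    by (metis space_pair_measure sets.top)
  have "emeasure (sample_weighted_distr \<phi> j) ?\<Omega> = (\<integral>\<^sup>+z. indicator ?\<Omega> z \<partial>sample_weighted_distr \<phi> j)"
    by (simp add: sample_weighted_distr_def)
  also have "\<dots> = sample_prod_integral (\<phi>(j := indicator ?\<Omega>))"
    by (rule sample_prod_integral_fun_upd[symmetric]) (use \<open>j < N\<close> in simp_all)
  also have "\<dots> \<le> (\<integral>\<^sup>+\<omega>. ennreal (max c 1) ^ N \<partial>P)"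
    unfolding sample_prod_integral_def
  proof (intro nn_integral_mono)
    fix \<omega>
    have "(\<Prod>l<N. (\<phi>(j := indicator ?\<Omega>)) l (Xk l \<omega>, Yk \<omega>)) \<le> (\<Prod>l<N. ennreal (max c 1))"
      by (intro prod_mono_ennreal)
        (auto simp: indicator_def intro: order.trans[OF bounded] ennreal_leI)
    then show "(\<Prod>l<N. (\<phi>(j := indicator ?\<Omega>)) l (Xk l \<omega>, Yk \<omega>)) \<le> ennreal (max c 1) ^ N"
      by simp
  qed
  also have "\<dots> < \<infinity>"
    using ennreal_power[of "max c 1" N] by (simp add: PP.emeasure_space_1)
  finally show ?thesis by simp
qed

text \<open>As functions of the \<open>j\<close>-th factor, both sides are integrals against the finite measures
  \<open>sample_weighted_distr \<phi> j\<close> and \<open>cond_weighted_distr \<phi> j\<close>; the induction hypothesis makes these agree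
  on rectangles, hence everywhere.\<close>

lemma block_law_step:
  assumes IH: "\<And>\<phi> c. (\<And>l. \<phi> l \<in> borel_measurable (MX \<Otimes>\<^sub>M MY)) \<Longrightarrow> (\<And>l z. \<phi> l z \<le> ennreal c) \<Longrightarrow>
      (\<And>l. j \<le> l \<Longrightarrow> l < N \<Longrightarrow> is_rect_indicator (\<phi> l)) \<Longrightarrow>
      sample_prod_integral \<phi> = cond_prod_integral \<phi>"
    and [measurable]: "\<And>l. \<phi> l \<in> borel_measurable (MX \<Otimes>\<^sub>M MY)"
    and bounded: "\<And>l z. \<phi> l z \<le> ennreal c"
    and rect: "\<And>l. Suc j \<le> l \<Longrightarrow> l < N \<Longrightarrow> is_rect_indicator (\<phi> l)"
  shows "sample_prod_integral \<phi> = cond_prod_integral \<phi>"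
proof (cases "j < N")
  case False
  then show ?thesis using rect by (intro IH[of \<phi> c] bounded) auto
next
  case True
  let ?\<mu>L = "sample_weighted_distr \<phi> j" and ?\<mu>R = "cond_weighted_distr \<phi> j"
  let ?E = "{A \<times> B |A B. A \<in> sets MX \<and> B \<in> sets MY}" and ?\<Omega> = "space MX \<times> space MY"
  have sets: "sets ?\<mu>L = sigma_sets ?\<Omega> ?E" "sets ?\<mu>R = sigma_sets ?\<Omega> ?E"
    by (simp_all add: sample_weighted_distr_def cond_weighted_distr_def sets_pair_measure)
  have "emeasure ?\<mu>L Z = emeasure ?\<mu>R Z" if "Z \<in> ?E" for Z
  proof -
    from that obtain A B where Z: "Z = A \<times> B" "A \<in> sets MX" "B \<in> sets MY" by auto
    then have [measurable]: "Z \<in> sets (MX \<Otimes>\<^sub>M MY)" by auto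
    have "emeasure ?\<mu>L Z = sample_prod_integral (\<phi>(j := indicator Z))"
      using True by (simp add: sample_prod_integral_fun_upd sample_weighted_distr_def)
    also have "\<dots> = cond_prod_integral (\<phi>(j := indicator Z))"
    proof (rule IH)
      show "(\<phi>(j := indicator Z)) l \<in> borel_measurable (MX \<Otimes>\<^sub>M MY)" for l by (cases "l = j") auto
      show "(\<phi>(j := indicator Z)) l z \<le> ennreal (max c 1)" for l z
        by (auto simp: indicator_def intro: order.trans[OF bounded] ennreal_leI)
      show "is_rect_indicator ((\<phi>(j := indicator Z)) l)" if "j \<le> l" "l < N" for l
        using Z rect that by (cases "l = j") (auto simp: is_rect_indicator_def)
    qed
    also have "\<dots> = emeasure ?\<mu>R Z"
      using True by (simp add: cond_prod_integral_fun_upd cond_weighted_distr_def)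
    finally show ?thesis .
  qed
  then have "?\<mu>L = ?\<mu>R"
    using sample_weighted_distr_finite[OF True _ bounded] sets
    by (intro measure_eqI_generator_eq[where \<Omega>="?\<Omega>" and E="?E" and A="\<lambda>_. ?\<Omega>"])
      (auto simp: Int_stable_pair_measure_generator pair_measure_closed)
  have "sample_prod_integral \<phi> = (\<integral>\<^sup>+z. \<phi> j z \<partial>?\<mu>L)"
    using sample_prod_integral_fun_upd[OF True, of \<phi> "\<phi> j"] by simp
  also have "\<dots> = (\<integral>\<^sup>+z. \<phi> j z \<partial>?\<mu>R)"
    using \<open>?\<mu>L = ?\<mu>R\<close> by simp
  also have "\<dots> = cond_prod_integral \<phi>"
    using cond_prod_integral_fun_upd[OF True, of \<phi> "\<phi> j"] by simp
  finally show ?thesis .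
qed

lemma block_law_bounded:
  assumes "\<And>l. \<phi> l \<in> borel_measurable (MX \<Otimes>\<^sub>M MY)" and "\<And>l z. \<phi> l z \<le> ennreal c"
  shows "sample_prod_integral \<phi> = cond_prod_integral \<phi>"
proof -
  have "sample_prod_integral \<phi> = cond_prod_integral \<phi>"
    if "\<And>l. \<phi> l \<in> borel_measurable (MX \<Otimes>\<^sub>M MY)" "\<And>l z. \<phi> l z \<le> ennreal c"
      "\<And>l. j \<le> l \<Longrightarrow> l < N \<Longrightarrow> is_rect_indicator (\<phi> l)" for j \<phi> c
    using that
  proof (induction j arbitrary: \<phi> c)
    case 0
    then show ?case by (intro block_law_rect) auto
  next
    case (Suc j)
    show ?case by (rule block_law_step[OF Suc.IH]) (use Suc.prems in auto)
  qed
  from this[of \<phi> c N] assms show ?thesis by auto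
qed

text \<open>Only an inequality: monotone convergence is used on the sample side, while on the conditional
  side the truncations are merely bounded by the untruncated function.\<close>

lemma block_law_le:
  assumes [measurable]: "\<phi> \<in> borel_measurable (MX \<Otimes>\<^sub>M MY)" and nonneg: "\<And>z. 0 \<le> \<phi> z"
  shows "sample_prod_integral (\<lambda>_ z. ennreal (\<phi> z)) \<le> cond_prod_integral (\<lambda>_ z. ennreal (\<phi> z))"
proof -
  let ?\<phi> = "\<lambda>n z. ennreal (min (\<phi> z) (real n))"
  have "sample_prod_integral (\<lambda>_ z. ennreal (\<phi> z)) = (\<integral>\<^sup>+\<omega>. (SUP n. \<Prod>l<N. ?\<phi> n (Xk l \<omega>, Yk \<omega>)) \<partial>P)"
    unfolding sample_prod_integral_def using nonneg
    by (intro nn_integral_cong prod_ennreal_eq_SUP_min) auto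
  also have "\<dots> = (SUP n. sample_prod_integral (\<lambda>_. ?\<phi> n))"
    unfolding sample_prod_integral_def
    by (rule nn_integral_monotone_convergence_SUP)
      (auto simp: incseq_def le_fun_def intro!: prod_mono_ennreal ennreal_leI)
  also have "\<dots> = (SUP n. cond_prod_integral (\<lambda>_. ?\<phi> n))"
  proof (intro SUP_cong refl)
    show "sample_prod_integral (\<lambda>_. ?\<phi> n) = cond_prod_integral (\<lambda>_. ?\<phi> n)" for n
      by (rule block_law_bounded[where c="real n"]) (auto intro!: ennreal_leI)
  qed
  also have "\<dots> \<le> cond_prod_integral (\<lambda>_ z. ennreal (\<phi> z))"
    unfolding cond_prod_integral_def
  proof (intro SUP_least nn_integral_mono_AE)
    fix n
    have "AE \<omega> in M. nn_cond_exp M F (\<lambda>\<omega>. ?\<phi> n (X \<omega>, Y \<omega>)) \<omega> \<le> nn_cond_exp M F (\<lambda>\<omega>. ennreal (\<phi> (X \<omega>, Y \<omega>))) \<omega>"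
      by (rule FS.nn_cond_exp_mono) (auto intro!: ennreal_leI)
    then show "AE \<omega> in M. (\<Prod>l<N. nn_cond_exp M F (\<lambda>\<omega>. ?\<phi> n (X \<omega>, Y \<omega>)) \<omega>) \<le>
        (\<Prod>l<N. nn_cond_exp M F (\<lambda>\<omega>. ennreal (\<phi> (X \<omega>, Y \<omega>))) \<omega>)"
      by eventually_elim (rule prod_mono_ennreal)
  qed
  finally show ?thesis .
qed

lemma block_mgf_le:
  fixes \<gamma> :: "'x \<Rightarrow> 'y \<Rightarrow> real"
  defines "r \<equiv> real_cond_exp M F (\<lambda>\<omega>. \<gamma> (X \<omega>) (Y \<omega>))"
  assumes [measurable]: "(\<lambda>z. \<gamma> (fst z) (snd z)) \<in> borel_measurable (MX \<Otimes>\<^sub>M MY)"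
    and mgf1: "AE \<omega> in M. nn_cond_exp M F (\<lambda>\<omega>'. ennreal (exp (t * \<gamma> (X \<omega>') (Y \<omega>')))) \<omega>
      \<le> ennreal (exp (r \<omega> * t + b1\<^sup>2 * t\<^sup>2 / 2))"
    and mgf2: "(\<integral>\<^sup>+\<omega>. ennreal (exp (real N * t * r \<omega>)) \<partial>M)
      \<le> ennreal (exp (\<mu> * (real N * t) + b2\<^sup>2 * (real N * t)\<^sup>2 / 2))"
  shows "(\<integral>\<^sup>+\<omega>. ennreal (exp (t * (\<Sum>l<N. \<gamma> (Xk l \<omega>) (Yk \<omega>)))) \<partial>P)
    \<le> ennreal (exp (real N * (\<mu> * t + (b1\<^sup>2 + real N * b2\<^sup>2) * t\<^sup>2 / 2)))"
proof -
  define \<phi> where "\<phi> z = exp (t * \<gamma> (fst z) (snd z))" for z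
  have [measurable]: "\<phi> \<in> borel_measurable (MX \<Otimes>\<^sub>M MY)" unfolding \<phi>_def by measurable
  let ?C = "ennreal (exp (real N * b1\<^sup>2 * t\<^sup>2 / 2))"
  have "(\<integral>\<^sup>+\<omega>. ennreal (exp (t * (\<Sum>l<N. \<gamma> (Xk l \<omega>) (Yk \<omega>)))) \<partial>P) =
      sample_prod_integral (\<lambda>_ z. ennreal (\<phi> z))"
    unfolding sample_prod_integral_def \<phi>_def by (simp add: sum_distrib_left exp_sum prod_ennreal)
  also have "\<dots> \<le> cond_prod_integral (\<lambda>_ z. ennreal (\<phi> z))"
    by (rule block_law_le) (simp_all add: \<phi>_def)
  also have "\<dots> \<le> (\<integral>\<^sup>+\<omega>. ?C * ennreal (exp (real N * t * r \<omega>)) \<partial>M)"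
    unfolding cond_prod_integral_def
  proof (rule nn_integral_mono_AE)
    show "AE \<omega> in M. (\<Prod>l<N. nn_cond_exp M F (\<lambda>\<omega>. ennreal (\<phi> (X \<omega>, Y \<omega>))) \<omega>)
        \<le> ?C * ennreal (exp (real N * t * r \<omega>))"
      using mgf1
    proof eventually_elim
      case (elim \<omega>)
      then have "(\<Prod>l<N. nn_cond_exp M F (\<lambda>\<omega>. ennreal (\<phi> (X \<omega>, Y \<omega>))) \<omega>)
          \<le> (\<Prod>l<N. ennreal (exp (r \<omega> * t + b1\<^sup>2 * t\<^sup>2 / 2)))"
        by (intro prod_mono_ennreal) (simp add: \<phi>_def)
      also have "\<dots> = ennreal (exp (real N * (r \<omega> * t + b1\<^sup>2 * t\<^sup>2 / 2)))"
        by (simp add: ennreal_power exp_of_nat_mult)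
      also have "real N * (r \<omega> * t + b1\<^sup>2 * t\<^sup>2 / 2) = real N * b1\<^sup>2 * t\<^sup>2 / 2 + real N * t * r \<omega>"
        by (simp add: algebra_simps)
      finally show ?case by (simp add: exp_add ennreal_mult)
    qed
  qed
  also have "\<dots> = ?C * (\<integral>\<^sup>+\<omega>. ennreal (exp (real N * t * r \<omega>)) \<partial>M)"
    by (rule nn_integral_cmult) (simp add: r_def)
  also have "\<dots> \<le> ?C * ennreal (exp (\<mu> * (real N * t) + b2\<^sup>2 * (real N * t)\<^sup>2 / 2))"
    by (intro mult_left_mono mgf2) simp
  also have "\<dots> = ennreal (exp (real N * (\<mu> * t + (b1\<^sup>2 + real N * b2\<^sup>2) * t\<^sup>2 / 2)))"
    by (simp add: ennreal_mult[symmetric] exp_add[symmetric] algebra_simps power2_eq_square)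
  finally show ?thesis .
qed

end

lemma hier_sample_block:
  assumes "hier_sample M MX MY X Y P Mn N Ys Xs" "prob_space M"
    "X \<in> measurable M MX" "Y \<in> measurable M MY" "k < Mn"
  shows "hier_block M MX MY X Y P N (Ys k) (Xs k)"
  using assms unfolding hier_sample_def hier_block_def by blast

lemma hier_sample_nn_integral_prod_blocks:
  assumes hs: "hier_sample M MX MY X Y P Mn N Ys Xs"
    and \<Psi>: "\<Psi> \<in> borel_measurable (MY \<Otimes>\<^sub>M PiM {..<N} (\<lambda>_. MX))"
  shows "(\<integral>\<^sup>+\<omega>. (\<Prod>k<Mn. \<Psi> (Ys k \<omega>, \<lambda>l\<in>{..<N}. Xs k l \<omega>)) \<partial>P) =
    (\<Prod>k<Mn. \<integral>\<^sup>+\<omega>. \<Psi> (Ys k \<omega>, \<lambda>l\<in>{..<N}. Xs k l \<omega>) \<partial>P)"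
proof -
  interpret prob_space P using hs by (simp add: hier_sample_def)
  have "indep_vars (\<lambda>_. MY \<Otimes>\<^sub>M PiM {..<N} (\<lambda>_. MX)) (\<lambda>k \<omega>. (Ys k \<omega>, \<lambda>l\<in>{..<N}. Xs k l \<omega>)) {..<Mn}"
    using hs by (simp add: hier_sample_def)
  then have "indep_vars (\<lambda>_. borel) (\<lambda>k \<omega>. \<Psi> (Ys k \<omega>, \<lambda>l\<in>{..<N}. Xs k l \<omega>)) {..<Mn}"
    by (rule indep_vars_compose2) (rule \<Psi>)
  then show ?thesis by (intro indep_vars_nn_integral) auto
qed

lemma hier_sample_mgf_le:
  fixes M :: "'w measure" and MY :: "'y measure" and X :: "'w \<Rightarrow> 'x" and Y :: "'w \<Rightarrow> 'y"
    and \<gamma> :: "'x \<Rightarrow> 'y \<Rightarrow> real"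
  defines "r \<equiv> real_cond_exp M (sigmaY M Y MY) (\<lambda>\<omega>. \<gamma> (X \<omega>) (Y \<omega>))"
  assumes hs: "hier_sample M MX MY X Y P Mn N Ys Xs" and M: "prob_space M"
    and X: "X \<in> measurable M MX" and Y: "Y \<in> measurable M MY"
    and \<gamma>[measurable]: "(\<lambda>z. \<gamma> (fst z) (snd z)) \<in> borel_measurable (MX \<Otimes>\<^sub>M MY)"
    and mgf1: "\<And>t. AE \<omega> in M. nn_cond_exp M (sigmaY M Y MY) (\<lambda>\<omega>'. ennreal (exp (t * \<gamma> (X \<omega>') (Y \<omega>')))) \<omega>
      \<le> ennreal (exp (r \<omega> * t + b1\<^sup>2 * t\<^sup>2 / 2))"
    and mgf2: "\<And>t. (\<integral>\<^sup>+\<omega>. ennreal (exp (t * r \<omega>)) \<partial>M) \<le> ennreal (exp (\<mu> * t + b2\<^sup>2 * t\<^sup>2 / 2))"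
  shows "(\<integral>\<^sup>+\<omega>. ennreal (exp (t * (\<Sum>k<Mn. \<Sum>l<N. \<gamma> (Xs k l \<omega>) (Ys k \<omega>)))) \<partial>P)
    \<le> ennreal (exp (real Mn * (real N * (\<mu> * t + (b1\<^sup>2 + real N * b2\<^sup>2) * t\<^sup>2 / 2))))"
proof -
  have "Ys k \<in> measurable P MY" "Xs k l \<in> measurable P MX" if "k < Mn" "l < N" for k l
    using hs that by (auto simp: hier_sample_def)
  then have [measurable]: "(\<lambda>\<omega>. \<gamma> (Xs k l \<omega>) (Ys k \<omega>)) \<in> borel_measurable P" if "k < Mn" "l < N" for k l
    using that by (intro borel_measurable_curry_comp[OF \<gamma>])
  have [measurable]: "(\<lambda>p. \<gamma> (snd p l) (fst p)) \<in> borel_measurable (MY \<Otimes>\<^sub>M PiM {..<N} (\<lambda>_. MX))"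
    if "l < N" for l
    using that by (intro borel_measurable_curry_comp[OF \<gamma>]) simp_all
  define B where "B = exp (real N * (\<mu> * t + (b1\<^sup>2 + real N * b2\<^sup>2) * t\<^sup>2 / 2))"
  define \<Psi> where "\<Psi> p = ennreal (exp (t * (\<Sum>l<N. \<gamma> (snd p l) (fst p))))" for p :: "'y \<times> (nat \<Rightarrow> 'x)"
  have [measurable]: "\<Psi> \<in> borel_measurable (MY \<Otimes>\<^sub>M PiM {..<N} (\<lambda>_. MX))" unfolding \<Psi>_def by measurable
  have \<Psi>_block: "\<Psi> (Ys k \<omega>, \<lambda>l\<in>{..<N}. Xs k l \<omega>) = ennreal (exp (t * (\<Sum>l<N. \<gamma> (Xs k l \<omega>) (Ys k \<omega>))))"
    for k \<omega> unfolding \<Psi>_def fst_conv snd_conv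
    by (subst sum.cong[OF refl, where h="\<lambda>l. \<gamma> (Xs k l \<omega>) (Ys k \<omega>)"]) auto
  have "(\<integral>\<^sup>+\<omega>. ennreal (exp (t * (\<Sum>k<Mn. \<Sum>l<N. \<gamma> (Xs k l \<omega>) (Ys k \<omega>)))) \<partial>P) =
      (\<integral>\<^sup>+\<omega>. (\<Prod>k<Mn. \<Psi> (Ys k \<omega>, \<lambda>l\<in>{..<N}. Xs k l \<omega>)) \<partial>P)"
    unfolding \<Psi>_block
    by (intro nn_integral_cong) (simp add: sum_distrib_left exp_sum prod_ennreal prod_nonneg)
  also have "\<dots> = (\<Prod>k<Mn. \<integral>\<^sup>+\<omega>. \<Psi> (Ys k \<omega>, \<lambda>l\<in>{..<N}. Xs k l \<omega>) \<partial>P)"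
    by (rule hier_sample_nn_integral_prod_blocks[OF hs]) simp
  also have "\<dots> \<le> (\<Prod>k<Mn. ennreal B)"
  proof (intro prod_mono_ennreal)
    fix k assume "k \<in> {..<Mn}"
    then show "(\<integral>\<^sup>+\<omega>. \<Psi> (Ys k \<omega>, \<lambda>l\<in>{..<N}. Xs k l \<omega>) \<partial>P) \<le> ennreal B"
      unfolding \<Psi>_block B_def
      using hier_block.block_mgf_le[OF hier_sample_block[OF hs M X Y] \<gamma>
          mgf1[of t, unfolded r_def] mgf2[of "real N * t", unfolded r_def]]
      by simp
  qed
  also have "\<dots> = ennreal (exp (real Mn * (real N * (\<mu> * t + (b1\<^sup>2 + real N * b2\<^sup>2) * t\<^sup>2 / 2))))"
    by (simp add: B_def ennreal_power exp_of_nat_mult)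
  finally show ?thesis .
qed

lemma hier_sample_lower_tail:
  fixes M :: "'w measure" and MY :: "'y measure" and X :: "'w \<Rightarrow> 'x" and Y :: "'w \<Rightarrow> 'y"
    and \<gamma> :: "'x \<Rightarrow> 'y \<Rightarrow> real"
  defines "r \<equiv> real_cond_exp M (sigmaY M Y MY) (\<lambda>\<omega>. \<gamma> (X \<omega>) (Y \<omega>))"
  assumes hs: "hier_sample M MX MY X Y P Mn N Ys Xs" and M: "prob_space M"
    and X: "X \<in> measurable M MX" and Y: "Y \<in> measurable M MY" and N: "N \<ge> 1"
    and \<gamma>[measurable]: "(\<lambda>z. \<gamma> (fst z) (snd z)) \<in> borel_measurable (MX \<Otimes>\<^sub>M MY)"
    and mgf1: "\<And>t. AE \<omega> in M. nn_cond_exp M (sigmaY M Y MY) (\<lambda>\<omega>'. ennreal (exp (t * \<gamma> (X \<omega>') (Y \<omega>')))) \<omega>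
      \<le> ennreal (exp (r \<omega> * t + b1\<^sup>2 * t\<^sup>2 / 2))"
    and mgf2: "\<And>t. (\<integral>\<^sup>+\<omega>. ennreal (exp (t * r \<omega>)) \<partial>M) \<le> ennreal (exp (\<mu> * t + b2\<^sup>2 * t\<^sup>2 / 2))"
    and \<delta>\<mu>: "\<delta> < \<mu>" and b2: "b2 > 0"
  shows "measure P {\<omega> \<in> space P. (\<Sum>k<Mn. \<Sum>l<N. \<gamma> (Xs k l \<omega>) (Ys k \<omega>)) \<le> real Mn * real N * \<delta>}
    \<le> exp (- real Mn * (\<mu> - \<delta>)\<^sup>2 / (2 * (b1\<^sup>2 / real N + b2\<^sup>2)))"
proof -
  interpret prob_space P using hs by (simp add: hier_sample_def)
  define D where "D \<omega> = (\<Sum>k<Mn. \<Sum>l<N. \<gamma> (Xs k l \<omega>) (Ys k \<omega>))" for \<omega>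
  have [measurable]: "D \<in> borel_measurable P"
    using hs unfolding D_def hier_sample_def
    by (intro borel_measurable_sum borel_measurable_curry_comp[OF \<gamma>]) auto
  define c where "c = b1\<^sup>2 / real N + b2\<^sup>2"
  have c: "c > 0" using b2 by (simp add: c_def add_nonneg_pos)
  define s where "s = (\<mu> - \<delta>) / (real N * c)"
  have s: "s > 0" using \<delta>\<mu> c N by (simp add: s_def)
  have "emeasure P {\<omega> \<in> space P. D \<omega> \<le> real Mn * real N * \<delta>}
      \<le> ennreal (exp (s * (real Mn * real N * \<delta>))) *
        (\<integral>\<^sup>+\<omega>. ennreal (exp (- s * D \<omega>)) * indicator (space P) \<omega> \<partial>P)"
    by (rule Chernoff_ineq_nn_integral_le[OF s]) simp_all
  also have "(\<integral>\<^sup>+\<omega>. ennreal (exp (- s * D \<omega>)) * indicator (space P) \<omega> \<partial>P) =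
      (\<integral>\<^sup>+\<omega>. ennreal (exp (- s * D \<omega>)) \<partial>P)"
    by (intro nn_integral_cong) simp
  also have "ennreal (exp (s * (real Mn * real N * \<delta>))) * \<dots> \<le> ennreal (exp (s * (real Mn * real N * \<delta>))) *
      ennreal (exp (real Mn * (real N * (\<mu> * (- s) + (b1\<^sup>2 + real N * b2\<^sup>2) * (- s)\<^sup>2 / 2))))"
    using hier_sample_mgf_le[OF hs M X Y \<gamma> mgf1[unfolded r_def] mgf2[unfolded r_def], of "- s"]
    unfolding D_def by (rule mult_left_mono) simp
  also have "\<dots> = ennreal (exp (- real Mn * (\<mu> - \<delta>)\<^sup>2 / (2 * c)))"
    using gaussian_chernoff_exponent[of "real N" c b1 b2 s \<mu> \<delta> "real Mn"] N c
    by (simp add: s_def c_def ennreal_mult[symmetric] exp_add[symmetric])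
  finally show ?thesis
    unfolding D_def c_def by (simp add: emeasure_eq_measure)
qed

lemma borel_measurable_param_section:
  assumes "(\<lambda>(\<theta>, x, y). g \<theta> x y) \<in> borel_measurable (restrict_space borel \<Theta> \<Otimes>\<^sub>M (MX \<Otimes>\<^sub>M MY))"
    and "\<theta> \<in> \<Theta>"
  shows "(\<lambda>z. g \<theta> (fst z) (snd z)) \<in> borel_measurable (MX \<Otimes>\<^sub>M MY)"
proof -
  have "(\<lambda>z. (\<theta>, z)) \<in> measurable (MX \<Otimes>\<^sub>M MY) (restrict_space borel \<Theta> \<Otimes>\<^sub>M (MX \<Otimes>\<^sub>M MY))"
    using assms(2)
    by (intro measurable_Pair measurable_const measurable_ident_sets) (auto simp: space_restrict_space)
  from measurable_compose[OF this assms(1)] show ?thesis by (simp add: case_prod_beta)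
qed

lemma Ghat_diff:
  "Ghat Mn N Ys Xs g \<omega> \<theta> - Ghat Mn N Ys Xs g \<omega> \<theta>' =
     (\<Sum>k<Mn. \<Sum>l<N. g \<theta> (Xs k l \<omega>) (Ys k \<omega>) - g \<theta>' (Xs k l \<omega>) (Ys k \<omega>)) / (real Mn * real N)"
  unfolding Ghat_def by (simp add: sum_subtractf diff_divide_distrib)

lemma Ghat_measurable:
  assumes "hier_sample M MX MY X Y P Mn N Ys Xs"
    and "(\<lambda>z. g \<theta> (fst z) (snd z)) \<in> borel_measurable (MX \<Otimes>\<^sub>M MY)"
  shows "(\<lambda>\<omega>. Ghat Mn N Ys Xs g \<omega> \<theta>) \<in> borel_measurable P"
  using assms unfolding Ghat_def hier_sample_def
  by (intro borel_measurable_times borel_measurable_const borel_measurable_sum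
      borel_measurable_curry_comp[OF assms(2)]) auto

lemma prob_Ghat_gap_lt:
  assumes hs: "hier_sample M MX MY X Y P Mn N Ys Xs" and M: "prob_space M"
    and X: "X \<in> measurable M MX" and Y: "Y \<in> measurable M MY" and Mn: "Mn \<ge> 1" and N: "N \<ge> 1"
    and g: "(\<lambda>z. g \<theta> (fst z) (snd z)) \<in> borel_measurable (MX \<Otimes>\<^sub>M MY)"
      "(\<lambda>z. g \<theta>' (fst z) (snd z)) \<in> borel_measurable (MX \<Otimes>\<^sub>M MY)"
    and int: "integrable M (\<lambda>\<omega>. g \<theta> (X \<omega>) (Y \<omega>))" "integrable M (\<lambda>\<omega>. g \<theta>' (X \<omega>) (Y \<omega>))"
    and mgf1: "\<And>t. AE \<omega> in M. nn_cond_exp M (sigmaY M Y MY) (\<lambda>\<omega>'. ennreal (exp (t * Gam X Y g \<theta>' \<theta> \<omega>'))) \<omega>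
      \<le> ennreal (exp (real_cond_exp M (sigmaY M Y MY) (Gam X Y g \<theta>' \<theta>) \<omega> * t + b1\<^sup>2 * t\<^sup>2 / 2))"
    and mgf2: "\<And>t. (\<integral>\<^sup>+ \<omega>. ennreal (exp (t * real_cond_exp M (sigmaY M Y MY) (Gam X Y g \<theta>' \<theta>) \<omega>)) \<partial>M)
      \<le> ennreal (exp ((\<integral>\<omega>. Gam X Y g \<theta>' \<theta> \<omega> \<partial>M) * t + b2\<^sup>2 * t\<^sup>2 / 2))"
    and gap: "\<delta> < \<epsilon>" "\<epsilon> < Gfun M X Y g \<theta> - Gfun M X Y g \<theta>'" and b2: "b2 > 0"
  shows "measure P {\<omega> \<in> space P. Ghat Mn N Ys Xs g \<omega> \<theta> - Ghat Mn N Ys Xs g \<omega> \<theta>' \<le> \<delta>}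
    < exp (- real Mn * (\<epsilon> - \<delta>)\<^sup>2 / (2 * (b1\<^sup>2 / real N + b2\<^sup>2)))"
proof -
  let ?\<mu> = "Gfun M X Y g \<theta> - Gfun M X Y g \<theta>'" and ?c = "b1\<^sup>2 / real N + b2\<^sup>2"
  have Gam: "Gam X Y g \<theta>' \<theta> = (\<lambda>\<omega>. g \<theta> (X \<omega>) (Y \<omega>) - g \<theta>' (X \<omega>) (Y \<omega>))"
    by (simp add: Gam_def fun_eq_iff)
  have \<mu>: "(\<integral>\<omega>. Gam X Y g \<theta>' \<theta> \<omega> \<partial>M) = ?\<mu>"
    unfolding Gam Gfun_def using int by (rule Bochner_Integration.integral_diff)
  have "{\<omega> \<in> space P. Ghat Mn N Ys Xs g \<omega> \<theta> - Ghat Mn N Ys Xs g \<omega> \<theta>' \<le> \<delta>} =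
      {\<omega> \<in> space P. (\<Sum>k<Mn. \<Sum>l<N. g \<theta> (Xs k l \<omega>) (Ys k \<omega>) - g \<theta>' (Xs k l \<omega>) (Ys k \<omega>))
        \<le> real Mn * real N * \<delta>}"
    using Mn N by (simp add: Ghat_diff divide_le_eq mult.commute)
  also have "measure P \<dots> \<le> exp (- real Mn * (?\<mu> - \<delta>)\<^sup>2 / (2 * ?c))"
    using hier_sample_lower_tail[OF hs M X Y N _ mgf1[unfolded Gam] mgf2[unfolded \<mu>, unfolded Gam]] g gap b2
    by (simp add: borel_measurable_diff)
  also have "\<dots> < exp (- real Mn * (\<epsilon> - \<delta>)\<^sup>2 / (2 * ?c))"
  proof -
    have "(\<epsilon> - \<delta>)\<^sup>2 < (?\<mu> - \<delta>)\<^sup>2" using gap by (intro power_strict_mono) auto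
    moreover have "?c > 0" using b2 by (simp add: add_nonneg_pos)
    ultimately show ?thesis using Mn by (simp add: divide_strict_right_mono)
  qed
  finally show ?thesis .
qed

lemma (in prob_space) prob_lt_card_mult_of_cover:
  assumes "finite I" "I \<noteq> {}" "B \<subseteq> (\<Union>i\<in>I. A i)"
    and "\<And>i. i \<in> I \<Longrightarrow> A i \<in> events" "\<And>i. i \<in> I \<Longrightarrow> prob (A i) < b"
  shows "prob B < real (card I) * b"
proof -
  have "prob B \<le> prob (\<Union>i\<in>I. A i)"
    using assms by (intro finite_measure_mono) auto
  also have "\<dots> \<le> (\<Sum>i\<in>I. prob (A i))"
    using assms by (intro finite_measure_subadditive_finite) auto
  also have "\<dots> < (\<Sum>i\<in>I. b)"
    using assms by (intro sum_strict_mono) auto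
  finally show ?thesis by simp
qed

lemma eps_opt_not_subset_gap:
  assumes "\<not> eps_opt F' \<delta> E \<subseteq> eps_opt F \<epsilon> E" "\<theta>' \<in> E" "finite E"
  shows "\<exists>\<theta>\<in>E - eps_opt F \<epsilon> E. F' \<theta> - F' \<theta>' \<le> \<delta>"
proof -
  obtain \<theta> where \<theta>: "\<theta> \<in> eps_opt F' \<delta> E" "\<theta> \<notin> eps_opt F \<epsilon> E" using assms(1) by auto
  have "Min (F' ` E) \<le> F' \<theta>'" using assms(2,3) by simp
  then show ?thesis using \<theta> unfolding eps_opt_def by force
qed

theorem mainTheorem3:
  fixes M :: "'w measure" and MX :: "'x measure" and MY :: "'y measure"
    and X :: "'w \<Rightarrow> 'x" and Y :: "'w \<Rightarrow> 'y"
    and \<Theta> :: "(real ^ 'd) set" and g :: "real ^ 'd \<Rightarrow> 'x \<Rightarrow> 'y \<Rightarrow> real"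
    and E :: "(real ^ 'd) set" and \<delta> \<epsilon> b1 b2 :: real
  assumes M: "prob_space M"
    and X: "X \<in> measurable M MX" and Y: "Y \<in> measurable M MY"
    and g_meas: "(\<lambda>(\<theta>, x, y). g \<theta> x y) \<in> borel_measurable (restrict_space borel \<Theta> \<Otimes>\<^sub>M (MX \<Otimes>\<^sub>M MY))"
    and g_int: "\<And>\<theta>. \<theta> \<in> \<Theta> \<Longrightarrow> integrable M (\<lambda>\<omega>. g \<theta> (X \<omega>) (Y \<omega>))"
    and E: "finite E" "E \<noteq> {}" "E \<subseteq> \<Theta>"
    and \<delta>\<epsilon>: "0 < \<delta>" "\<delta> < \<epsilon>"
    and nonopt: "E - eps_opt (Gfun M X Y g) \<epsilon> E \<noteq> {}"
    and b: "b1 > 0" "b2 > 0"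
    and mgf1: "\<And>t \<theta> \<theta>'. \<theta> \<in> E \<Longrightarrow> \<theta>' \<in> E \<Longrightarrow>
       AE \<omega> in M. nn_cond_exp M (sigmaY M Y MY) (\<lambda>\<omega>'. ennreal (exp (t * Gam X Y g \<theta> \<theta>' \<omega>'))) \<omega>
         \<le> ennreal (exp (real_cond_exp M (sigmaY M Y MY) (Gam X Y g \<theta> \<theta>') \<omega> * t + b1\<^sup>2 * t\<^sup>2 / 2))"
    and mgf2: "\<And>t \<theta> \<theta>'. \<theta> \<in> E \<Longrightarrow> \<theta>' \<in> E \<Longrightarrow>
       (\<integral>\<^sup>+ \<omega>. ennreal (exp (t * real_cond_exp M (sigmaY M Y MY) (Gam X Y g \<theta> \<theta>') \<omega>)) \<partial>M)
         \<le> ennreal (exp ((\<integral>\<omega>. Gam X Y g \<theta> \<theta>' \<omega> \<partial>M) * t + b2\<^sup>2 * t\<^sup>2 / 2))"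
  shows "\<forall>(Mn::nat) (N::nat) (P :: 'p measure) Ys Xs.
           Mn \<ge> 1 \<longrightarrow> N \<ge> 1 \<longrightarrow> hier_sample M MX MY X Y P Mn N Ys Xs \<longrightarrow>
           measure P {\<omega> \<in> space P. \<not> (eps_opt (Ghat Mn N Ys Xs g \<omega>) \<delta> E \<subseteq> eps_opt (Gfun M X Y g) \<epsilon> E)}
             < real (card E) * exp (- real Mn * (\<epsilon> - \<delta>)\<^sup>2 / (2 * (b1\<^sup>2 / real N + b2\<^sup>2)))"
proof (intro allI impI)
  fix Mn N :: nat and P :: "'p measure" and Ys :: "nat \<Rightarrow> 'p \<Rightarrow> 'y" and Xs :: "nat \<Rightarrow> nat \<Rightarrow> 'p \<Rightarrow> 'x"
  assume Mn: "Mn \<ge> 1" and N: "N \<ge> 1" and hs: "hier_sample M MX MY X Y P Mn N Ys Xs"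
  interpret prob_space P using hs by (simp add: hier_sample_def)
  let ?G = "Gfun M X Y g" and ?S = "eps_opt (Gfun M X Y g) \<epsilon> E"
    and ?b = "exp (- real Mn * (\<epsilon> - \<delta>)\<^sup>2 / (2 * (b1\<^sup>2 / real N + b2\<^sup>2)))"
  have "Min (?G ` E) \<in> ?G ` E" using E(1,2) by (intro Min_in) auto
  then obtain \<theta>\<^sub>0 where \<theta>\<^sub>0: "\<theta>\<^sub>0 \<in> E" "?G \<theta>\<^sub>0 = Min (?G ` E)" by (metis imageE)
  define A where "A \<theta> = {\<omega> \<in> space P. Ghat Mn N Ys Xs g \<omega> \<theta> - Ghat Mn N Ys Xs g \<omega> \<theta>\<^sub>0 \<le> \<delta>}" for \<theta>
  have g: "(\<lambda>z. g \<theta> (fst z) (snd z)) \<in> borel_measurable (MX \<Otimes>\<^sub>M MY)" if "\<theta> \<in> E" for \<theta>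
    using that E(3) by (intro borel_measurable_param_section[OF g_meas]) auto
  have "measure P {\<omega> \<in> space P. \<not> (eps_opt (Ghat Mn N Ys Xs g \<omega>) \<delta> E \<subseteq> ?S)} < real (card (E - ?S)) * ?b"
  proof (rule prob_lt_card_mult_of_cover[OF _ nonopt])
    show "{\<omega> \<in> space P. \<not> (eps_opt (Ghat Mn N Ys Xs g \<omega>) \<delta> E \<subseteq> ?S)} \<subseteq> (\<Union>\<theta>\<in>E - ?S. A \<theta>)"
      using eps_opt_not_subset_gap[OF _ \<theta>\<^sub>0(1) E(1)] unfolding A_def by blast
    show "A \<theta> \<in> events" if "\<theta> \<in> E - ?S" for \<theta>
    proof -
      have [measurable]: "(\<lambda>\<omega>. Ghat Mn N Ys Xs g \<omega> \<theta>) \<in> borel_measurable P"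
        "(\<lambda>\<omega>. Ghat Mn N Ys Xs g \<omega> \<theta>\<^sub>0) \<in> borel_measurable P"
        using that \<theta>\<^sub>0(1) by (auto intro: Ghat_measurable[OF hs g])
      show ?thesis unfolding A_def by measurable
    qed
    show "measure P (A \<theta>) < ?b" if "\<theta> \<in> E - ?S" for \<theta>
      unfolding A_def using that \<theta>\<^sub>0 E(3) \<delta>\<epsilon> b
      unfolding A_def using that \<theta>\<^sub>0 E(3) \<delta>\<epsilon> b
      by (intro prob_Ghat_gap_lt[OF hs M X Y Mn N g g g_int g_int mgf1 mgf2]) (auto simp: eps_opt_def)
  qed (use E(1) in simp)
  also have "\<dots> \<le> real (card E) * ?b"
    using E(1) by (intro mult_right_mono of_nat_mono card_mono) auto
  finally show "measure P {\<omega> \<in> space P. \<not> (eps_opt (Ghat Mn N Ys Xs g \<omega>) \<delta> E \<subseteq> ?S)} < real (card E) * ?b" .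
qed

end
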